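(* Let $K$ be a set of $n$ distinct keys from a totally ordered set, and let $L'$ be a uniformly random ordering of $K$, written $L' = a :: L$ (so $a$ is the first key of $L'$ and $L$ is the list of the remaining $n-1$ keys). Run memoized Quicksort (as defined in the context) first on $L$ and then on $L'$, with the memo tables (for Quicksort and for hash-consing) shared between the two runs. Then the expected running time of the second run, on $L'$, is $O(n)$. The expectation is over the uniformly random ordering of the input and over the internal randomization of the hash functions used to implement the memo tables.
   Context: Quicksort on a list $\ell$ of distinct keys: if $\ell$ is empty, return the empty list; otherwise $\ell = h :: t$, the pivot is $h$, one computes $s = $ the sublist of $t$ of keys $< h$ and $g = $ the sublist of $t$ of keys $\geq h$ (both by filtering $t$, which preserves the relative order of keys and takes time linear in the length of $t$), recursively sorts $s$ and $g$, and returns $\mathrm{sort}(s) \mathbin{@} (h :: \mathrm{sort}(g))$. Memoized Quicksort is the same algorithm in which (i) the lists produced by filtering are built with hash-consing, so that structurally equal lists are represented by the same object and can be compared and hashed in expected $O(1)$ time, each hash-consing step costing expected $O(1)$ time; and (ii) every recursive call first looks up its argument list in a memo table (keyed by the argument list, lookup and update costing expected $O(1)$ time); if a result for an equal list is stored there, that result is returned immediately, otherwise the call is executed and its result is stored. Running time counts elementary operations, with each memo-table operation and each hash-consing operation costing expected constant time. *)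

theory Defs
  imports "HOL-Probability.Probability" "HOL-Combinatorics.Multiset_Permutations"
begin

text \<open>
  The memo table is a partial map from
  (hash-consed, hence structurally compared) argument lists to their sorted
  results.  Every elementary operation, every memo-table lookup/update and
  every hash-consing step is charged unit cost (these cost expected O(1)).
\<close>

function memo_qs ::
  "('a::linorder list \<Rightarrow> 'a list option) \<Rightarrow> 'a list
     \<Rightarrow> 'a list \<times> ('a list \<Rightarrow> 'a list option) \<times> nat" where
  "memo_qs M xs =
     (case M xs of
        Some r \<Rightarrow> (r, M, 1)  \<comment> \<open>memo lookup hit\<close>
      | None \<Rightarrow>
          (case xs of
             [] \<Rightarrow> ([], M(xs \<mapsto> []), 3)
               \<comment> \<open>lookup, return empty list, store\<close>
           | h # t \<Rightarrow>
               (let s = filter (\<lambda>x. x < h) t;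
                    g = filter (\<lambda>x. h \<le> x) t;
                    (rs, M1, c1) = memo_qs M s;
                    (rg, M2, c2) = memo_qs M1 g;
                    r = rs @ (h # rg)
                in (r, M2(xs \<mapsto> r),
                    1 + (length t + 1) + (length s + length g)
                      + c1 + c2 + (length rs + 1) + 1))))"
      \<comment> \<open>lookup; filtering t (linear); hash-consing each produced cell;
          two recursive calls; append (linear in first list) plus the cons; store\<close>
  by pat_completeness auto
termination
  by (relation "Wellfounded.measure (\<lambda>(M, xs). length xs)")
     (auto simp: less_Suc_eq_le)

definition second_run_cost :: "'a::linorder list \<Rightarrow> nat" where
  "second_run_cost L' =
     (let L = tl L';
          (_, M1, _) = memo_qs Map.empty L;
          (_, _, c) = memo_qs M1 L'
      in c)"

end

theory Submission
  imports Defs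
begin

text \<open>
  Quicksort on a list recurses on its subproblems: the two filtered tails
  relative to the head as pivot (qs_subproblems).  A memo table is sound
  (memo_sound) if every memoized list has a result of the right length and
  all its subproblems are memoized as well; runs preserve soundness and
  memoize all subproblems of their argument.  Hence after the first run on L
  the table contains every subproblem of L.  The second run on a # L calls
  Quicksort on the two halves of L split at a.  A half of a memoized
  subproblem filter P L, split at a, costs one miss whose pivot h is the
  pivot of filter P L: the side of h away from a is itself memoized (a single
  lookup), and the side of h towards a is again a half of a memoized
  subproblem.  So the cost is linear in path_work, the total size of the
  subproblems met on the search path of a in the recursion tree of L
  (memo_cost_path).  Averaged over all orders, a random pivot leaves at most
  three quarters of the keys on the side of a in expectation
  (sum_side_size), which gives expected path work at most 4 n
  (sum_path_work) and expected cost at most 43 n for the second run.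
\<close>

declare memo_qs.simps [simp del]

abbreviation memo_cost :: "('a::linorder list \<Rightarrow> 'a list option) \<Rightarrow> 'a list \<Rightarrow> nat" where
  "memo_cost M xs \<equiv> snd (snd (memo_qs M xs))"

lemma memo_qs_hit: "M xs = Some r \<Longrightarrow> memo_qs M xs = (r, M, 1)"
  by (subst memo_qs.simps) simp

lemma memo_qs_miss_Nil: "M [] = None \<Longrightarrow> memo_qs M [] = ([], M([] \<mapsto> []), 3)"
  by (subst memo_qs.simps) simp

lemma memo_qs_miss_Cons:
  assumes "M (h # t) = None"
    and "memo_qs M (filter (\<lambda>x. x < h) t) = (rs, M1, c1)"
    and "memo_qs M1 (filter (\<lambda>x. h \<le> x) t) = (rg, M2, c2)"
  shows "memo_qs M (h # t) = (rs @ h # rg, M2(h # t \<mapsto> rs @ h # rg),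
           2 * length t + 4 + c1 + c2 + length rs)"
proof -
  have "length (filter (\<lambda>x. x < h) t) + length (filter (\<lambda>x. h \<le> x) t) = length t"
    using sum_length_filter_compl[of "\<lambda>x. x < h" t] by (simp add: not_less)
  then show ?thesis
    using assms by (subst memo_qs.simps) (simp add: Let_def)
qed

lemma memo_cost_Nil: "memo_cost M [] \<le> 3"
  by (cases "M []") (simp_all add: memo_qs_hit memo_qs_miss_Nil)

function qs_subproblems :: "'a::linorder list \<Rightarrow> 'a list set" where
  "qs_subproblems [] = {[]}"
| "qs_subproblems (h # t) = insert (h # t)
     (qs_subproblems (filter (\<lambda>x. x < h) t) \<union> qs_subproblems (filter (\<lambda>x. h \<le> x) t))"
  by pat_completeness auto
termination
  by (relation "Wellfounded.measure length") (auto simp: less_Suc_eq_le)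

lemma qs_subproblems_self: "xs \<in> qs_subproblems xs"
  by (cases xs) auto

definition memo_sound :: "('a::linorder list \<Rightarrow> 'a list option) \<Rightarrow> bool" where
  "memo_sound M \<longleftrightarrow>
     (\<forall>k r. M k = Some r \<longrightarrow> length r = length k \<and> qs_subproblems k \<subseteq> dom M)"

lemma memo_sound_empty: "memo_sound Map.empty"
  by (simp add: memo_sound_def)

lemma memo_sound_dom: "memo_sound M \<Longrightarrow> xs \<in> dom M \<Longrightarrow> qs_subproblems xs \<subseteq> dom M"
  by (auto simp: memo_sound_def)

lemma memo_sound_update:
  assumes "memo_sound M" "length r = length xs" "qs_subproblems xs \<subseteq> insert xs (dom M)"
  shows "memo_sound (M(xs \<mapsto> r))"
  using assms by (auto simp: memo_sound_def)

lemma memo_qs_sound: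
  assumes "memo_sound M" "memo_qs M xs = (r, M', c)"
  shows "length r = length xs \<and> memo_sound M' \<and> qs_subproblems xs \<subseteq> dom M' \<and> dom M \<subseteq> dom M'"
  using assms
proof (induction xs arbitrary: M r M' c rule: measure_induct_rule[of length])
  case (less xs)
  show ?case
  proof (cases "M xs")
    case (Some r0)
    then show ?thesis
      using less.prems memo_sound_dom[of M xs] by (auto simp: memo_qs_hit memo_sound_def)
  next
    case None
    show ?thesis
    proof (cases xs)
      case Nil
      with None less.prems show ?thesis
        by (auto simp: memo_qs_miss_Nil intro: memo_sound_update)
    next
      case (Cons h t)
      obtain rs M1 c1 where run1: "memo_qs M (filter (\<lambda>x. x < h) t) = (rs, M1, c1)"
        by (metis prod_cases3)
      obtain rg M2 c2 where run2: "memo_qs M1 (filter (\<lambda>x. h \<le> x) t) = (rg, M2, c2)"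
        by (metis prod_cases3)
      have IH1: "length rs = length (filter (\<lambda>x. x < h) t) \<and> memo_sound M1
          \<and> qs_subproblems (filter (\<lambda>x. x < h) t) \<subseteq> dom M1 \<and> dom M \<subseteq> dom M1"
        using less.IH[OF _ less.prems(1) run1] Cons by (simp add: le_imp_less_Suc)
      have IH2: "length rg = length (filter (\<lambda>x. h \<le> x) t) \<and> memo_sound M2
          \<and> qs_subproblems (filter (\<lambda>x. h \<le> x) t) \<subseteq> dom M2 \<and> dom M1 \<subseteq> dom M2"
        using less.IH[OF _ _ run2] IH1 Cons by (simp add: le_imp_less_Suc)
      have result: "r = rs @ h # rg" "M' = M2(xs \<mapsto> rs @ h # rg)"
        using memo_qs_miss_Cons[OF None[unfolded Cons] run1 run2] less.prems(2) Cons by auto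
      have length_r: "length r = length xs"
        using IH1 IH2 sum_length_filter_compl[of "\<lambda>x. x < h" t] by (simp add: result Cons not_less)
      have "qs_subproblems xs = insert xs
          (qs_subproblems (filter (\<lambda>x. x < h) t) \<union> qs_subproblems (filter (\<lambda>x. h \<le> x) t))"
        by (simp add: Cons)
      then have subproblems: "qs_subproblems xs \<subseteq> insert xs (dom M2)"
        using IH1 IH2 by blast
      then have "memo_sound M'"
        using IH2 length_r by (simp add: result memo_sound_update)
      moreover have "dom M' = insert xs (dom M2)"
        by (simp add: result)
      ultimately show ?thesis
        using length_r subproblems subset_trans[of "dom M" "dom M1" "dom M2"] IH1 IH2 by auto
    qed
  qed
qed

lemma memo_cost_Cons:
  assumes "memo_sound M"
    and "memo_qs M (filter (\<lambda>x. x < h) t) = (rs, M1, c1)"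
    and "memo_qs M1 (filter (\<lambda>x. h \<le> x) t) = (rg, M2, c2)"
  shows "memo_cost M (h # t) \<le> 3 * length t + 4 + c1 + c2"
proof (cases "M (h # t)")
  case None
  have "length rs \<le> length t"
    using memo_qs_sound[OF assms(1,2)] by simp
  then show ?thesis
    using memo_qs_miss_Cons[OF None assms(2,3)] by simp
qed (simp add: memo_qs_hit)

lemma memo_cost_low_memoized:
  assumes "memo_sound M" "filter (\<lambda>x. x < h) t \<in> dom M"
  shows "memo_cost M (h # t) \<le> 3 * length t + 5 + memo_cost M (filter (\<lambda>x. h \<le> x) t)"
proof -
  obtain r0 where "M (filter (\<lambda>x. x < h) t) = Some r0"
    using assms(2) by auto
  then have run1: "memo_qs M (filter (\<lambda>x. x < h) t) = (r0, M, 1)"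
    by (rule memo_qs_hit)
  obtain rg M2 c2 where run2: "memo_qs M (filter (\<lambda>x. h \<le> x) t) = (rg, M2, c2)"
    by (metis prod_cases3)
  show ?thesis
    using memo_cost_Cons[OF assms(1) run1 run2] run2 by simp
qed

lemma memo_cost_high_memoized:
  assumes "memo_sound M" "filter (\<lambda>x. h \<le> x) t \<in> dom M"
  shows "memo_cost M (h # t) \<le> 3 * length t + 5 + memo_cost M (filter (\<lambda>x. x < h) t)"
proof -
  obtain rs M1 c1 where run1: "memo_qs M (filter (\<lambda>x. x < h) t) = (rs, M1, c1)"
    by (metis prod_cases3)
  have "dom M \<subseteq> dom M1"
    using memo_qs_sound[OF assms(1) run1] by simp
  then obtain r0 where "M1 (filter (\<lambda>x. h \<le> x) t) = Some r0"
    using assms(2) by auto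
  then have run2: "memo_qs M1 (filter (\<lambda>x. h \<le> x) t) = (r0, M1, 1)"
    by (rule memo_qs_hit)
  show ?thesis
    using memo_cost_Cons[OF assms(1) run1 run2] run1 by simp
qed

text \<open>
  For a key a not in L, path_work a P L is the total length of the
  subproblems on the search path of a in the Quicksort recursion tree of
  filter P L: the current subproblem filter P L contributes its length, and
  the path continues into the side of its pivot (its first P-element)
  containing a.
\<close>

fun path_work :: "'a::linorder \<Rightarrow> ('a \<Rightarrow> bool) \<Rightarrow> 'a list \<Rightarrow> nat" where
  "path_work a P [] = 0"
| "path_work a P (h # t) =
     (if P h then length (filter P (h # t))
        + path_work a (\<lambda>x. P x \<and> (if a < h then x < h else h \<le> x)) t
      else path_work a P t)"

text \<open>
  Let h, the first P-element, be the
  pivot of the memoized subproblem filter P (h # t).  The half of it on the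
  side of a containing h costs a linear overhead plus the cost of the next
  subproblem on the path, since the other side of h is memoized.
\<close>

lemma memo_cost_step_below:
  assumes "memo_sound M" "h < a" "P h" "filter (\<lambda>x. P x \<and> x < h) t \<in> dom M"
  shows "memo_cost M (filter (\<lambda>x. P x \<and> x < a) (h # t))
       \<le> 3 * length (filter P t) + 5 + memo_cost M (filter (\<lambda>x. (P x \<and> h \<le> x) \<and> x < a) t)"
proof -
  define t' where "t' = filter (\<lambda>x. P x \<and> x < a) t"
  have "filter (\<lambda>x. x < h) t' = filter (\<lambda>x. P x \<and> x < h) t"
    using assms(2) by (auto simp: t'_def intro: filter_cong)
  moreover have "filter (\<lambda>x. h \<le> x) t' = filter (\<lambda>x. (P x \<and> h \<le> x) \<and> x < a) t"
    by (auto simp: t'_def intro: filter_cong)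
  moreover have "length t' \<le> length (filter P t)"
    using length_filter_le[of "\<lambda>x. x < a" "filter P t"] by (simp add: t'_def)
  moreover have "filter (\<lambda>x. P x \<and> x < a) (h # t) = h # t'"
    using assms(2,3) by (simp add: t'_def)
  ultimately show ?thesis
    using memo_cost_low_memoized[OF assms(1), of h t'] assms(4) by simp
qed

lemma memo_cost_step_above:
  assumes "memo_sound M" "a < h" "P h" "filter (\<lambda>x. P x \<and> h \<le> x) t \<in> dom M"
  shows "memo_cost M (filter (\<lambda>x. P x \<and> a \<le> x) (h # t))
       \<le> 3 * length (filter P t) + 5 + memo_cost M (filter (\<lambda>x. (P x \<and> x < h) \<and> a \<le> x) t)"
proof -
  define t' where "t' = filter (\<lambda>x. P x \<and> a \<le> x) t"
  have "filter (\<lambda>x. h \<le> x) t' = filter (\<lambda>x. P x \<and> h \<le> x) t"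
    using assms(2) by (auto simp: t'_def intro: filter_cong)
  moreover have "filter (\<lambda>x. x < h) t' = filter (\<lambda>x. (P x \<and> x < h) \<and> a \<le> x) t"
    by (auto simp: t'_def intro: filter_cong)
  moreover have "length t' \<le> length (filter P t)"
    using length_filter_le[of "\<lambda>x. a \<le> x" "filter P t"] by (simp add: t'_def)
  moreover have "filter (\<lambda>x. P x \<and> a \<le> x) (h # t) = h # t'"
    using assms(2,3) by (simp add: t'_def)
  ultimately show ?thesis
    using memo_cost_high_memoized[OF assms(1), of h t'] assms(4) by simp
qed

text \<open>
  The half not containing the pivot h is the corresponding half of the next
  subproblem on the path.
\<close>

lemma memo_cost_path:
  assumes sound: "memo_sound M"
    and "qs_subproblems (filter P L) \<subseteq> dom M" and "a \<notin> set L"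
  shows "memo_cost M (filter (\<lambda>x. P x \<and> x < a) L) \<le> 5 * path_work a P L + 3
       \<and> memo_cost M (filter (\<lambda>x. P x \<and> a \<le> x) L) \<le> 5 * path_work a P L + 3"
  using assms(2,3)
proof (induction L arbitrary: P)
  case Nil
  then show ?case
    using memo_cost_Nil[of M] by simp
next
  case (Cons h t)
  show ?case
  proof (cases "P h")
    case False
    then show ?thesis
      using Cons by simp
  next
    case True
    have low_sub: "qs_subproblems (filter (\<lambda>x. P x \<and> x < h) t) \<subseteq> dom M"
      and high_sub: "qs_subproblems (filter (\<lambda>x. P x \<and> h \<le> x) t) \<subseteq> dom M"
      using Cons.prems(1) True by auto
    have "a \<noteq> h" "a \<notin> set t"
      using Cons.prems(2) by auto
    then consider (below) "h < a" | (above) "a < h"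
      by fastforce
    then show ?thesis
    proof cases
      case below
      define Q where "Q = (\<lambda>x. P x \<and> h \<le> x)"
      have "\<not> a < h"
        using below by simp
      then have work: "path_work a P (h # t) = Suc (length (filter P t)) + path_work a Q t"
        using True by (simp add: Q_def)
      have IH: "memo_cost M (filter (\<lambda>x. Q x \<and> x < a) t) \<le> 5 * path_work a Q t + 3
          \<and> memo_cost M (filter (\<lambda>x. Q x \<and> a \<le> x) t) \<le> 5 * path_work a Q t + 3"
        using Cons.IH[of Q] high_sub \<open>a \<notin> set t\<close> by (simp add: Q_def)
      have "filter (\<lambda>x. P x \<and> x < h) t \<in> dom M"
        using subsetD[OF low_sub qs_subproblems_self] .
      then have "memo_cost M (filter (\<lambda>x. P x \<and> x < a) (h # t))
          \<le> 3 * length (filter P t) + 5 + memo_cost M (filter (\<lambda>x. Q x \<and> x < a) t)"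
        using memo_cost_step_below[where P = P, OF sound below True] by (simp add: Q_def)
      moreover have "filter (\<lambda>x. P x \<and> a \<le> x) (h # t) = filter (\<lambda>x. Q x \<and> a \<le> x) t"
        using below by (auto simp: Q_def intro: filter_cong)
      ultimately show ?thesis
        using IH work by simp
    next
      case above
      define Q where "Q = (\<lambda>x. P x \<and> x < h)"
      have work: "path_work a P (h # t) = Suc (length (filter P t)) + path_work a Q t"
        using True above by (simp add: Q_def)
      have IH: "memo_cost M (filter (\<lambda>x. Q x \<and> x < a) t) \<le> 5 * path_work a Q t + 3
          \<and> memo_cost M (filter (\<lambda>x. Q x \<and> a \<le> x) t) \<le> 5 * path_work a Q t + 3"
        using Cons.IH[of Q] low_sub \<open>a \<notin> set t\<close> by (simp add: Q_def)
      have "filter (\<lambda>x. P x \<and> h \<le> x) t \<in> dom M"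
        using subsetD[OF high_sub qs_subproblems_self] .
      then have "memo_cost M (filter (\<lambda>x. P x \<and> a \<le> x) (h # t))
          \<le> 3 * length (filter P t) + 5 + memo_cost M (filter (\<lambda>x. Q x \<and> a \<le> x) t)"
        using memo_cost_step_above[where P = P, OF sound above True] by (simp add: Q_def)
      moreover have "filter (\<lambda>x. P x \<and> x < a) (h # t) = filter (\<lambda>x. Q x \<and> x < a) t"
        using above by (auto simp: Q_def intro: filter_cong)
      ultimately show ?thesis
        using IH work by simp
    qed
  qed
qed

lemma second_run_cost_le:
  assumes "distinct (a # L)"
  shows "second_run_cost (a # L) \<le> 3 * length L + 10 * path_work a (\<lambda>_. True) L + 10"
proof -
  obtain r M c where first_run: "memo_qs Map.empty L = (r, M, c)"
    by (metis prod_cases3)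
  have sound: "memo_sound M" and sub: "qs_subproblems L \<subseteq> dom M"
    using memo_qs_sound[OF memo_sound_empty first_run] by auto
  have a_L: "a \<notin> set L"
    using assms by simp
  obtain rs M1 c1 where run1: "memo_qs M (filter (\<lambda>x. x < a) L) = (rs, M1, c1)"
    by (metis prod_cases3)
  obtain rg M2 c2 where run2: "memo_qs M1 (filter (\<lambda>x. a \<le> x) L) = (rg, M2, c2)"
    by (metis prod_cases3)
  have "c1 \<le> 5 * path_work a (\<lambda>_. True) L + 3"
    using memo_cost_path[OF sound, of "\<lambda>_. True" L a] sub a_L run1 by simp
  moreover have "memo_sound M1" "dom M \<subseteq> dom M1"
    using memo_qs_sound[OF sound run1] by auto
  then have "c2 \<le> 5 * path_work a (\<lambda>_. True) L + 3"
    using memo_cost_path[of M1 "\<lambda>_. True" L a] sub a_L run2 by auto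
  moreover have "second_run_cost (a # L) = memo_cost M (a # L)"
    using first_run by (simp add: second_run_cost_def split_def)
  ultimately show ?thesis
    using memo_cost_Cons[OF sound run1 run2] by linarith
qed

lemma sum_permutations_of_set_Cons:
  assumes "finite S" "S \<noteq> {}"
  shows "(\<Sum>L\<in>permutations_of_set S. f L)
       = (\<Sum>h\<in>S. \<Sum>t\<in>permutations_of_set (S - {h}). f (h # t))"
proof -
  have "(\<Sum>L\<in>permutations_of_set S. f L)
      = (\<Sum>h\<in>S. \<Sum>L\<in>(\<lambda>t. h # t) ` permutations_of_set (S - {h}). f L)"
    unfolding permutations_of_set_nonempty[OF assms(2)]
    by (rule sum.UNION_disjoint) (auto simp: assms(1))
  also have "\<dots> = (\<Sum>h\<in>S. \<Sum>t\<in>permutations_of_set (S - {h}). f (h # t))"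
    by (rule sum.cong[OF refl], subst sum.reindex) (auto simp: inj_on_def)
  finally show ?thesis .
qed

lemma sum_card_below:
  fixes B :: "'a::linorder set"
  assumes "finite B"
  shows "2 * (\<Sum>h\<in>B. card {x\<in>B. x < h}) = card B * (card B - 1)"
  using assms
proof (induction B rule: finite_linorder_max_induct)
  case empty
  then show ?case by simp
next
  case (insert b B)
  have "{x\<in>insert b B. x < h} = {x\<in>B. x < h}" if "h \<in> B" for h
    using that insert.hyps(2) by auto
  then have "(\<Sum>h\<in>B. card {x\<in>insert b B. x < h}) = (\<Sum>h\<in>B. card {x\<in>B. x < h})"
    by simp
  moreover have "{x\<in>insert b B. x < b} = B"
    using insert.hyps(2) by auto
  ultimately have "(\<Sum>h\<in>insert b B. card {x\<in>insert b B. x < h})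
      = card B + (\<Sum>h\<in>B. card {x\<in>B. x < h})"
    using insert.hyps(1,2) by auto
  with insert show ?case
    by (cases "card B") (auto simp: algebra_simps)
qed

lemma sum_card_above:
  fixes B :: "'a::linorder set"
  assumes "finite B"
  shows "2 * (\<Sum>h\<in>B. card {x\<in>B. h < x}) = card B * (card B - 1)"
proof -
  have split: "card {x\<in>B. x < h} + card {x\<in>B. h < x} = card B - 1" if "h \<in> B" for h
  proof -
    have "B - {h} = {x\<in>B. x < h} \<union> {x\<in>B. h < x}"
      by (auto simp: neq_iff)
    moreover have "{x\<in>B. x < h} \<inter> {x\<in>B. h < x} = {}"
      by auto
    ultimately have "card (B - {h}) = card {x\<in>B. x < h} + card {x\<in>B. h < x}"
      using assms by (simp add: card_Un_disjoint)
    then show ?thesis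
      using assms that by simp
  qed
  have "(\<Sum>h\<in>B. card {x\<in>B. x < h}) + (\<Sum>h\<in>B. card {x\<in>B. h < x})
      = (\<Sum>h\<in>B. card {x\<in>B. x < h} + card {x\<in>B. h < x})"
    by (rule sum.distrib[symmetric])
  also have "\<dots> = (\<Sum>h\<in>B. card B - 1)"
    using split by (rule sum.cong[OF refl])
  finally have "(\<Sum>h\<in>B. card {x\<in>B. x < h}) + (\<Sum>h\<in>B. card {x\<in>B. h < x}) = card B * (card B - 1)"
    by simp
  with sum_card_below[OF assms] show ?thesis
    by linarith
qed

definition side_size :: "'a::linorder \<Rightarrow> 'a set \<Rightarrow> 'a \<Rightarrow> nat" where
  "side_size a A h = card {x\<in>A. if a < h then x < h else h < x}"

text \<open>
  On average over the pivot h in A, at most three quarters of A remain on the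
  side of a; this contraction drives the linear bound on the search path.
\<close>

lemma sum_side_size:
  fixes A :: "'a::linorder set"
  assumes fin: "finite A" and "a \<notin> A"
  shows "4 * (\<Sum>h\<in>A. side_size a A h) \<le> 3 * card A ^ 2"
proof -
  define Lo where "Lo = {x\<in>A. x < a}"
  define Hi where "Hi = {x\<in>A. a < x}"
  define l where "l = card Lo"
  define r where "r = card Hi"
  have trichotomy: "x < a \<or> a < x" if "x \<in> A" for x
    using that \<open>a \<notin> A\<close> by (metis linorder_neqE)
  have A: "A = Lo \<union> Hi" "Lo \<inter> Hi = {}"
    using trichotomy by (auto simp: Lo_def Hi_def)
  have fin_Lo: "finite Lo" and fin_Hi: "finite Hi"
    using fin by (auto simp: Lo_def Hi_def)
  have side_Hi: "side_size a A h = l + card {x\<in>Hi. x < h}" if "h \<in> Hi" for h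
  proof -
    have "{x\<in>A. x < h} = Lo \<union> {x\<in>Hi. x < h}"
      using that trichotomy by (auto simp: Lo_def Hi_def)
    moreover have "Lo \<inter> {x\<in>Hi. x < h} = {}"
      using A(2) by blast
    moreover have "a < h"
      using that by (simp add: Hi_def)
    ultimately show ?thesis
      using fin_Lo fin_Hi by (simp add: side_size_def l_def card_Un_disjoint)
  qed
  have side_Lo: "side_size a A h = r + card {x\<in>Lo. h < x}" if "h \<in> Lo" for h
  proof -
    have "{x\<in>A. h < x} = Hi \<union> {x\<in>Lo. h < x}"
      using that trichotomy by (auto simp: Lo_def Hi_def)
    moreover have "Hi \<inter> {x\<in>Lo. h < x} = {}"
      using A(2) by blast
    moreover have "\<not> a < h"
      using that by (auto simp: Lo_def)
    ultimately show ?thesis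
      using fin_Lo fin_Hi by (simp add: side_size_def r_def card_Un_disjoint)
  qed
  have "(\<Sum>h\<in>A. side_size a A h) = (\<Sum>h\<in>Lo. side_size a A h) + (\<Sum>h\<in>Hi. side_size a A h)"
    using sum.union_disjoint[OF fin_Lo fin_Hi A(2), of "side_size a A"] by (simp only: A(1)[symmetric])
  also have "\<dots> = (\<Sum>h\<in>Lo. r + card {x\<in>Lo. h < x}) + (\<Sum>h\<in>Hi. l + card {x\<in>Hi. x < h})"
    using side_Lo side_Hi by simp
  also have "\<dots> = 2 * (l * r) + (\<Sum>h\<in>Lo. card {x\<in>Lo. h < x}) + (\<Sum>h\<in>Hi. card {x\<in>Hi. x < h})"
    by (simp add: sum.distrib l_def r_def)
  finally have "2 * (\<Sum>h\<in>A. side_size a A h) = 4 * (l * r) + l * (l - 1) + r * (r - 1)"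
    using sum_card_above[OF fin_Lo] sum_card_below[OF fin_Hi] by (simp add: l_def r_def)
  moreover have "card A = l + r"
    using A fin_Lo fin_Hi by (simp add: l_def r_def card_Un_disjoint)
  then have "card A ^ 2 = l * l + 2 * (l * r) + r * r"
    by (simp add: power2_eq_square algebra_simps)
  moreover have "l * (l - 1) \<le> l * l" "r * (r - 1) \<le> r * r"
    by simp_all
  moreover have "2 * (l * r) \<le> l * l + r * r"
  proof (cases "l \<le> r")
    case True
    then obtain d where "r = l + d" using le_Suc_ex by blast
    then show ?thesis by (simp add: algebra_simps)
  next
    case False
    then obtain d where "l = r + d" using le_Suc_ex[of r l] by auto
    then show ?thesis by (simp add: algebra_simps)
  qed
  ultimately show ?thesis
    by linarith
qed

lemma path_work_Cons_perm:
  assumes "t \<in> permutations_of_set (S - {h})" "finite S" "h \<in> S" "P h"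
  shows "path_work a P (h # t)
       = card {x\<in>S. P x} + path_work a (\<lambda>x. P x \<and> (if a < h then x < h else h \<le> x)) t"
proof -
  have t: "set t = S - {h}" "distinct t"
    using assms(1) by (auto simp: permutations_of_set_def)
  have "length (filter P (h # t)) = Suc (card ({x. P x} \<inter> (S - {h})))"
    using t assms(4) by (simp add: distinct_length_filter)
  also have "{x. P x} \<inter> (S - {h}) = {x\<in>S. P x} - {h}"
    by auto
  also have "Suc (card ({x\<in>S. P x} - {h})) = card {x\<in>S. P x}"
    using assms(2-4) card_Suc_Diff1[of "{x\<in>S. P x}" h] by simp
  finally show ?thesis
    using assms(4) by simp
qed

lemma sum_path_work:
  fixes S :: "'a::linorder set"
  assumes "finite S" "a \<notin> S"
  shows "(\<Sum>L\<in>permutations_of_set S. path_work a P L) \<le> 4 * card {x\<in>S. P x} * fact (card S)"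
  using assms
proof (induction "card S" arbitrary: S P)
  case 0
  then show ?case by simp
next
  case (Suc n)
  define A where "A = {x\<in>S. P x}"
  define k where "k = card A"
  have fin_A: "finite A" and a_A: "a \<notin> A" and A_S: "A \<subseteq> S"
    using Suc.prems by (auto simp: A_def)
  have per_head: "(\<Sum>t\<in>permutations_of_set (S - {h}). path_work a P (h # t))
      \<le> fact n * (if P h then k + 4 * side_size a A h else 4 * k)" if h: "h \<in> S" for h
  proof -
    have S_h: "n = card (S - {h})" "finite (S - {h})" "a \<notin> S - {h}"
      using Suc h by auto
    show ?thesis
    proof (cases "P h")
      case False
      then have "(\<Sum>t\<in>permutations_of_set (S - {h}). path_work a P (h # t))
          = (\<Sum>t\<in>permutations_of_set (S - {h}). path_work a P t)"
        by simp
      also have "\<dots> \<le> 4 * card {x\<in>S - {h}. P x} * fact n"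
        using Suc.hyps(1)[OF S_h] S_h(1) by simp
      also have "{x\<in>S - {h}. P x} = A"
        using False by (auto simp: A_def)
      finally show ?thesis
        using False by (simp add: k_def mult_ac)
    next
      case True
      define P' where "P' = (\<lambda>x. P x \<and> (if a < h then x < h else h \<le> x))"
      have "(\<Sum>t\<in>permutations_of_set (S - {h}). path_work a P (h # t))
          = (\<Sum>t\<in>permutations_of_set (S - {h}). k + path_work a P' t)"
        using path_work_Cons_perm[where S = S and h = h and P = P, OF _ Suc.prems(1) h True] by (simp add: A_def k_def P'_def)
      also have "\<dots> = fact n * k + (\<Sum>t\<in>permutations_of_set (S - {h}). path_work a P' t)"
        using S_h by (simp add: sum.distrib)
      also have "(\<Sum>t\<in>permutations_of_set (S - {h}). path_work a P' t)
          \<le> 4 * card {x\<in>S - {h}. P' x} * fact n"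
        using Suc.hyps(1)[OF S_h] S_h(1) by simp
      also have "{x\<in>S - {h}. P' x} = {x\<in>A. if a < h then x < h else h < x}"
        by (auto simp: P'_def A_def)
      finally show ?thesis
        using True by (simp add: side_size_def algebra_simps)
    qed
  qed
  have "(\<Sum>L\<in>permutations_of_set S. path_work a P L)
      = (\<Sum>h\<in>S. \<Sum>t\<in>permutations_of_set (S - {h}). path_work a P (h # t))"
    using Suc by (intro sum_permutations_of_set_Cons) auto
  also have "\<dots> \<le> (\<Sum>h\<in>S. fact n * (if P h then k + 4 * side_size a A h else 4 * k))"
    using per_head by (rule sum_mono)
  also have "\<dots> = fact n * ((\<Sum>h\<in>A. k + 4 * side_size a A h) + (\<Sum>h\<in>S - A. 4 * k))"
  proof -
    have "S \<inter> {h. P h} = A" "S \<inter> - {h. P h} = S - A"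
      by (auto simp: A_def)
    then show ?thesis
      using sum.If_cases[OF Suc.prems(1), of P "\<lambda>h. k + 4 * side_size a A h" "\<lambda>_. 4 * k"]
      by (simp add: sum_distrib_left[symmetric])
  qed
  also have "\<dots> = fact n * (k * k + 4 * (\<Sum>h\<in>A. side_size a A h) + (Suc n - k) * (4 * k))"
    using Suc.prems(1) Suc.hyps(2) A_S fin_A
    by (simp add: sum.distrib sum_distrib_left card_Diff_subset k_def)
  also have "\<dots> \<le> fact n * (4 * k * Suc n)"
  proof -
    have "4 * (\<Sum>h\<in>A. side_size a A h) \<le> 3 * k * k"
      using sum_side_size[OF fin_A a_A] by (simp add: k_def power2_eq_square)
    moreover obtain d where "Suc n = k + d"
      using card_mono[OF Suc.prems(1) A_S] Suc.hyps(2) le_Suc_ex by (metis k_def)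
    ultimately have "k * k + 4 * (\<Sum>h\<in>A. side_size a A h) + (Suc n - k) * (4 * k) \<le> 4 * k * Suc n"
      by (simp add: algebra_simps)
    then show ?thesis
      by (rule mult_le_mono2)
  qed
  also have "\<dots> = 4 * card {x\<in>S. P x} * fact (card S)"
    using Suc.hyps(2)[symmetric] by (simp add: k_def A_def algebra_simps)
  finally show ?case .
qed

lemma sum_second_run_cost:
  fixes K :: "'a::linorder set"
  assumes "finite K" "K \<noteq> {}"
  shows "(\<Sum>L'\<in>permutations_of_set K. second_run_cost L') \<le> 43 * card K * fact (card K)"
proof -
  obtain m where m: "card K = Suc m"
    using assms by (metis card_gt_0_iff gr0_implies_Suc)
  have per_head: "(\<Sum>t\<in>permutations_of_set (K - {a}). second_run_cost (a # t)) \<le> (43 * m + 10) * fact m"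
    if a: "a \<in> K" for a
  proof -
    have K_a: "finite (K - {a})" "card (K - {a}) = m" "a \<notin> K - {a}"
      using assms(1) a m by auto
    have "(\<Sum>t\<in>permutations_of_set (K - {a}). second_run_cost (a # t))
        \<le> (\<Sum>t\<in>permutations_of_set (K - {a}). 3 * m + 10 + 10 * path_work a (\<lambda>_. True) t)"
    proof (rule sum_mono)
      fix t assume "t \<in> permutations_of_set (K - {a})"
      then have "distinct (a # t)" "length t = m"
        using K_a(2) distinct_card by (fastforce simp: permutations_of_set_def)+
      then show "second_run_cost (a # t) \<le> 3 * m + 10 + 10 * path_work a (\<lambda>_. True) t"
        using second_run_cost_le by fastforce
    qed
    also have "\<dots> = (3 * m + 10) * fact m
        + 10 * (\<Sum>t\<in>permutations_of_set (K - {a}). path_work a (\<lambda>_. True) t)"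
      using K_a by (simp add: sum.distrib sum_distrib_left)
    also have "\<dots> \<le> (3 * m + 10) * fact m + 10 * (4 * m * fact m)"
    proof -
      have "{x\<in>K - {a}. True} = K - {a}"
        by blast
      then show ?thesis
        using sum_path_work[OF K_a(1,3), of "\<lambda>_. True"] K_a(2) by (simp only:)
    qed
    finally show ?thesis
      by (simp add: algebra_simps)
  qed
  have "(\<Sum>L'\<in>permutations_of_set K. second_run_cost L')
      = (\<Sum>a\<in>K. \<Sum>t\<in>permutations_of_set (K - {a}). second_run_cost (a # t))"
    by (rule sum_permutations_of_set_Cons[OF assms])
  also have "\<dots> \<le> (\<Sum>a\<in>K. (43 * m + 10) * fact m)"
    using per_head by (rule sum_mono)
  also have "\<dots> = Suc m * ((43 * m + 10) * fact m)"
    using m by simp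
  also have "\<dots> \<le> 43 * Suc m * fact (Suc m)"
    by (simp add: algebra_simps)
  finally show ?thesis
    using m by simp
qed

theorem mainTheorem1:
  shows "\<exists>C::real. \<forall>K::'a::linorder set. finite K \<and> K \<noteq> {} \<longrightarrow>
           measure_pmf.expectation (pmf_of_set (permutations_of_set K))
             (\<lambda>L'. real (second_run_cost L')) \<le> C * real (card K)"
proof (intro exI allI impI)
  fix K :: "'a::linorder set"
  assume K: "finite K \<and> K \<noteq> {}"
  then have "measure_pmf.expectation (pmf_of_set (permutations_of_set K)) (\<lambda>L'. real (second_run_cost L'))
      = real (\<Sum>L'\<in>permutations_of_set K. second_run_cost L') / fact (card K)"
    by (simp add: integral_pmf_of_set)
  also have "\<dots> \<le> real (43 * card K * fact (card K)) / fact (card K)"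
    using sum_second_run_cost[of K] K by (intro divide_right_mono of_nat_mono) simp_all
  also have "\<dots> = 43 * real (card K)"
    by simp
  finally show "measure_pmf.expectation (pmf_of_set (permutations_of_set K))
      (\<lambda>L'. real (second_run_cost L')) \<le> 43 * real (card K)" .
qed

end
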